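(* Let $E$ be a linear space of $\mathbf{b}\times\mathbf{c}$ complex matrices and $r\le \min\{\mathbf{b},\mathbf{c}\}$. Suppose that, in suitable bases, every $X\in E$ has the block form $$X=\begin{pmatrix} \mathbf{x}&W\\ U&0\end{pmatrix}$$ with $\mathbf{x}$ of size $r\times r$, $W$ of size $r\times(\mathbf{c}-r)$, $U$ of size $(\mathbf{b}-r)\times r$ and zero lower-right block, and that $U\mathbf{x}^kW=0$ for all $k\ge 0$. Then every element of $E$ has rank at most $r$. *)

theory Defs
  imports "Jordan_Normal_Form.DL_Rank"
begin

definition mat_subspace :: "nat \<Rightarrow> nat \<Rightarrow> 'a::field mat set \<Rightarrow> bool" where
  "mat_subspace b c E \<longleftrightarrow> E \<subseteq> carrier_mat b c \<and> 0\<^sub>m b c \<in> E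
     \<and> (\<forall>X\<in>E. \<forall>Y\<in>E. X + Y \<in> E) \<and> (\<forall>a X. X \<in> E \<longrightarrow> a \<cdot>\<^sub>m X \<in> E)"

end

theory Submission
  imports Defs "Jordan_Normal_Form.Matrix_Kernel"
begin

text \<open>
  The vectors v with U x^k v = 0 for all k form a subspace K that is x-invariant, contains
  the columns of W and is annihilated by U. If the columns of an injective r \<times> m matrix B span K,
  then W = B S, x B = B Y and U B = 0 for suitable S and Y, so that
  [x W; U 0] = [x B; U 0] [1 0; 0 S], and the m independent columns of [B; -Y] lie in the kernel
  of [x B; U 0]. By rank-nullity this matrix, and hence [x W; U 0], has rank at most
  (r + m) - m = r. Multiplying by the invertible P and Q does not change the rank.
\<close>

lemma mult_mat_vec_linear_map:
  fixes A :: "'a::field mat"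
  assumes A: "A \<in> carrier_mat nr nc"
  shows "linear_map class_ring (module_vec TYPE('a) nc) (module_vec TYPE('a) nr) (\<lambda>v. A *\<^sub>v v)"
  unfolding linear_map_def
proof (intro conjI)
  show "mod_hom class_ring (module_vec TYPE('a) nc) (module_vec TYPE('a) nr) (\<lambda>v. A *\<^sub>v v)"
    by (intro mod_hom.intro vec_module, unfold mod_hom_axioms_def)
      (use A in \<open>auto simp: LinearCombinations.module_hom_def Matrix.module_vec_def
        mult_add_distrib_mat_vec mult_mat_vec\<close>)
qed (rule vec_vs)+

lemma mat_kernel_subspace:
  fixes A :: "'a::field mat"
  assumes A: "A \<in> carrier_mat nr nc"
  shows "subspace class_ring (mat_kernel A) (module_vec TYPE('a) nc)"
proof -
  interpret L: linear_map class_ring "module_vec TYPE('a) nc" "module_vec TYPE('a) nr" "\<lambda>v. A *\<^sub>v v"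
    by (rule mult_mat_vec_linear_map[OF A])
  have "L.kerT = mat_kernel A"
    using A unfolding L.ker_def mat_kernel_def by (auto simp: Matrix.module_vec_def)
  then show ?thesis using L.kerT_is_subspace by simp
qed

lemma rank_plus_kernel_dim:
  fixes A :: "'a::field mat"
  assumes A: "A \<in> carrier_mat nr nc"
  shows "vec_space.rank nr A + kernel_dim A = nc"
proof -
  interpret NC: vec_space "TYPE('a)" nc .
  interpret NR: vec_space "TYPE('a)" nr .
  interpret K: kernel nr nc A by (unfold_locales, rule A)
  interpret L: linear_map class_ring "module_vec TYPE('a) nc" "module_vec TYPE('a) nr" "\<lambda>v. A *\<^sub>v v"
    by (rule mult_mat_vec_linear_map[OF A])
  have im: "L.imT = NR.span (set (cols A))"
    using NR.col_space_eq[OF A] A unfolding L.im_def NR.col_space_def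
    by (auto simp: Matrix.module_vec_def)
  have ker: "L.kerT = mat_kernel A"
    using A unfolding L.ker_def mat_kernel_def by (auto simp: Matrix.module_vec_def)
  from L.rank_nullity[OF NC.fin_dim]
  show ?thesis unfolding im ker NR.rank_def NC.dim_is_n by simp
qed

lemma (in vec_space) rank_le_of_col_space_subset:
  assumes A: "A \<in> carrier_mat n na" and B: "B \<in> carrier_mat n nb"
    and sub: "col_space A \<subseteq> col_space B"
  shows "rank A \<le> rank B"
proof -
  have sA: "subspace class_ring (col_space A) V" and sB: "subspace class_ring (col_space B) V"
    using A B cols_dim[of A] cols_dim[of B] unfolding col_space_def by (auto intro!: span_is_subspace)
  have "subspace class_ring (col_space A) (vs (col_space B))"
    by (rule nested_subspaces[OF sB sA sub])
  from vectorspace.subspace_dim[OF subspace_is_vs[OF sB] this] show ?thesis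
    using fin_dim_span_cols[OF A] fin_dim_span_cols[OF B] unfolding rank_def col_space_def by auto
qed

lemma rank_mult_right_le:
  fixes A B :: "'a::field mat"
  assumes A: "A \<in> carrier_mat nr n" and B: "B \<in> carrier_mat n nc"
  shows "vec_space.rank nr (A * B) \<le> vec_space.rank nr A"
proof -
  interpret vec_space "TYPE('a)" nr .
  have "col_space (A * B) \<subseteq> col_space A"
    unfolding col_space_eq[OF mult_carrier_mat[OF A B]] col_space_eq[OF A]
    using A B by (auto intro!: bexI[of _ "B *\<^sub>v _"])
  then show ?thesis by (rule rank_le_of_col_space_subset[OF mult_carrier_mat[OF A B] A])
qed

lemma obtain_inverse_mat:
  fixes P :: "'a::semiring_1 mat"
  assumes "invertible_mat P" and P: "P \<in> carrier_mat n n"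
  obtains P' where "P' \<in> carrier_mat n n" "P * P' = 1\<^sub>m n" "P' * P = 1\<^sub>m n"
proof -
  obtain P' where PP': "P * P' = 1\<^sub>m n" and P'P: "P' * P = 1\<^sub>m (dim_row P')"
    using assms unfolding invertible_mat_def inverts_mat_def by auto
  have "P' \<in> carrier_mat n n"
    using arg_cong[OF PP', of dim_col] arg_cong[OF P'P, of dim_col] P by auto
  with PP' P'P show thesis by (intro that) auto
qed

lemma rank_mult_invertible:
  fixes A P Q :: "'a::field mat"
  assumes A: "A \<in> carrier_mat nr nc"
    and P: "P \<in> carrier_mat nr nr" "invertible_mat P"
    and Q: "Q \<in> carrier_mat nc nc" "invertible_mat Q"
  shows "vec_space.rank nr (P * A * Q) = vec_space.rank nr A"
proof -
  obtain P' where P': "P' \<in> carrier_mat nr nr" "P' * P = 1\<^sub>m nr"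
    using obtain_inverse_mat[OF P(2,1)] by metis
  obtain Q' where Q': "Q' \<in> carrier_mat nc nc" "Q * Q' = 1\<^sub>m nc"
    using obtain_inverse_mat[OF Q(2,1)] by metis
  have PA: "P * A \<in> carrier_mat nr nc" using P A by simp
  have "mat_kernel (P * A) = mat_kernel A" by (rule mat_kernel_mult_eq[OF A P(1) P'])
  then have left: "vec_space.rank nr (P * A) = vec_space.rank nr A"
    using rank_plus_kernel_dim[OF PA] rank_plus_kernel_dim[OF A] unfolding kernel_dim_def by simp
  have "P * A = P * A * Q * Q'"
    using PA Q Q' by (simp add: assoc_mult_mat[of _ nr nc] right_mult_one_mat)
  then have "vec_space.rank nr (P * A) \<le> vec_space.rank nr (P * A * Q)"
    using rank_mult_right_le[OF mult_carrier_mat[OF PA Q(1)] Q'(1)] by simp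
  moreover have "vec_space.rank nr (P * A * Q) \<le> vec_space.rank nr (P * A)"
    by (rule rank_mult_right_le[OF PA Q(1)])
  ultimately show ?thesis using left by simp
qed

lemma kernel_dim_ge_of_mult_eq_zero:
  fixes A J :: "'a::field mat"
  assumes A: "A \<in> carrier_mat nr n" and J: "J \<in> carrier_mat n m"
    and AJ: "A * J = 0\<^sub>m nr m" and J_inj: "mat_kernel J = {0\<^sub>v m}"
  shows "m \<le> kernel_dim A"
proof -
  interpret vec_space "TYPE('a)" n .
  interpret KA: kernel nr n A by (unfold_locales, rule A)
  interpret KJ: kernel n m J by (unfold_locales, rule J)
  have "KJ.Ker.span {0\<^sub>v m} = mat_kernel J"
    using KJ.Ker.span_closed[of "{0\<^sub>v m}"] KJ.Ker.span_zero J_inj by auto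
  then have "kernel_dim J = 0" using KJ.Ker.dim0I by simp
  then have rank_J: "rank J = m" using rank_plus_kernel_dim[OF J] by simp
  have sub: "col_space J \<subseteq> mat_kernel A"
  proof
    fix v assume "v \<in> col_space J"
    then obtain z where z: "z \<in> carrier_vec m" and v: "v = J *\<^sub>v z"
      unfolding col_space_eq[OF J] using J by auto
    have "A *\<^sub>v v = (A * J) *\<^sub>v z" using z A J v by simp
    also have "\<dots> = 0\<^sub>v nr" unfolding AJ using z by auto
    finally show "v \<in> mat_kernel A" using z J A v by (auto intro: mat_kernelI)
  qed
  have sJ: "subspace class_ring (col_space J) V"
    using J cols_dim[of J] unfolding col_space_def by (auto intro!: span_is_subspace)
  have sK: "subspace class_ring (mat_kernel A) V" by (rule mat_kernel_subspace[OF A])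
  have "KA.Ker.fin_dim"
    using kernel_basis_exists[OF A] unfolding KA.Ker.fin_dim_def KA.Ker.basis_def by auto
  then have "rank J \<le> KA.dim"
    using vectorspace.subspace_dim[OF subspace_is_vs[OF sK] nested_subspaces[OF sK sJ sub]]
      fin_dim_span_cols[OF J]
    unfolding rank_def col_space_def by auto
  then show ?thesis using rank_J by simp
qed

lemma obtain_injective_mat_spanning:
  fixes K :: "'a::field vec set"
  assumes K: "K \<subseteq> carrier_vec n"
  obtains m B where "B \<in> carrier_mat n m" "mat_kernel B = {0\<^sub>v m}"
    "\<And>j. j < m \<Longrightarrow> col B j \<in> K" "\<And>v. v \<in> K \<Longrightarrow> \<exists>y\<in>carrier_vec m. v = B *\<^sub>v y"
proof -
  interpret vec_space "TYPE('a)" n .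
  have "\<exists>S. finite S \<and> maximal S (\<lambda>S. S \<subseteq> K \<and> lin_indpt S)"
  proof (rule maximal_exists[where N = n and B = "{}"])
    fix S assume "S \<subseteq> K \<and> lin_indpt S"
    then show "finite S \<and> card S \<le> n" using K li_le_dim[OF fin_dim] dim_is_n by auto
  next
    have "lin_indpt {}" by (rule finite_lin_indpt2) auto
    then show "{} \<subseteq> K \<and> lin_indpt {}" by simp
  qed
  then obtain S where fin: "finite S" and max: "maximal S (\<lambda>S. S \<subseteq> K \<and> lin_indpt S)"
    by blast
  have SK: "S \<subseteq> K" and indpt: "lin_indpt S" using max unfolding maximal_def by auto
  have K_span: "v \<in> span S" if v: "v \<in> K" for v
  proof (cases "v \<in> S")
    case True
    then show ?thesis using SK K span_mem by blast
  next
    case False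
    then have "lin_dep (S \<union> {v})" using max v SK unfolding maximal_def by blast
    then show ?thesis using lin_dep_iff_in_span[OF _ indpt _ False] SK K v by auto
  qed
  obtain vs where vs: "distinct vs" "set vs = S" using finite_distinct_list[OF fin] by blast
  have vs_carrier: "set vs \<subseteq> carrier_vec n" using vs SK K by auto
  define B where "B = mat_of_cols n vs"
  have B: "B \<in> carrier_mat n (length vs)" unfolding B_def by simp
  have cols_B: "cols B = vs" unfolding B_def using vs_carrier by simp
  show thesis
  proof (rule that[OF B])
    show "mat_kernel B = {0\<^sub>v (length vs)}"
    proof (intro equalityI subsetI)
      fix z assume z: "z \<in> mat_kernel B"
      have "z = 0\<^sub>v (length vs)"
      proof (rule ccontr)
        assume "z \<noteq> 0\<^sub>v (length vs)"
        from lin_depI[OF B _ this] z B have "lin_dep S"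
          using cols_B vs by (auto simp: mat_kernel_def)
        with indpt show False by simp
      qed
      then show "z \<in> {0\<^sub>v (length vs)}" by simp
    qed (use B in \<open>auto intro!: mat_kernelI\<close>)
    show "col B j \<in> K" if "j < length vs" for j
      using that vs SK cols_B by (metis cols_length cols_nth nth_mem subsetD)
    show "\<exists>y\<in>carrier_vec (length vs). v = B *\<^sub>v y" if "v \<in> K" for v
      using K_span[OF that] col_space_eq[OF B] B unfolding col_space_def cols_B vs(2) by auto
  qed
qed

lemma obtain_mult_right_factor:
  fixes A B :: "'a::field mat"
  assumes A: "A \<in> carrier_mat n k" and B: "B \<in> carrier_mat n m"
    and cols: "\<And>j. j < k \<Longrightarrow> \<exists>y\<in>carrier_vec m. col A j = B *\<^sub>v y"
  obtains Y where "Y \<in> carrier_mat m k" "A = B * Y"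
proof -
  define ys where "ys = map (\<lambda>j. SOME y. y \<in> carrier_vec m \<and> col A j = B *\<^sub>v y) [0..<k]"
  have ys: "ys ! j \<in> carrier_vec m \<and> col A j = B *\<^sub>v (ys ! j)" if "j < k" for j
    unfolding ys_def using someI_ex[OF cols[OF that, unfolded Bex_def]] that by simp
  define Y where "Y = mat_of_cols m ys"
  have Y: "Y \<in> carrier_mat m k" using mat_of_cols_carrier(1)[of m ys] by (simp add: Y_def ys_def)
  have "A = B * Y"
  proof (rule mat_col_eqI)
    fix j assume "j < dim_col (B * Y)"
    then have j: "j < k" using Y by simp
    have "col (B * Y) j = B *\<^sub>v col Y j" by (rule col_mult2[OF B Y j])
    also have "col Y j = ys ! j" unfolding Y_def using ys[OF j] j by (simp add: ys_def)
    finally show "col A j = col (B * Y) j" using ys[OF j] by simp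
  qed (use A B Y in auto)
  with Y show thesis by (rule that)
qed

lemma rank_four_block_invariant_le:
  fixes x B U Y :: "'a::field mat"
  assumes x: "x \<in> carrier_mat r r" and B: "B \<in> carrier_mat r m" and U: "U \<in> carrier_mat e r"
    and Y: "Y \<in> carrier_mat m m" and B_inj: "mat_kernel B = {0\<^sub>v m}"
    and xB: "x * B = B * Y" and UB: "U * B = 0\<^sub>m e m"
  shows "vec_space.rank (r + e) (four_block_mat x B U (0\<^sub>m e m)) \<le> r"
proof -
  define M where "M = four_block_mat x B U (0\<^sub>m e m)"
  have M: "M \<in> carrier_mat (r + e) (r + m)" unfolding M_def using x B U by simp
  define J where "J = B @\<^sub>r (- Y)"
  have J: "J \<in> carrier_mat (r + m) m" unfolding J_def using B Y by auto
  have J_blocks: "J = four_block_mat B (0\<^sub>m r 0) (- Y) (0\<^sub>m m 0)"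
    unfolding J_def append_rows_def using B Y by simp
  have "M * J = four_block_mat (x * B + B * - Y) (x * 0\<^sub>m r 0 + B * 0\<^sub>m m 0)
      (U * B + 0\<^sub>m e m * - Y) (U * 0\<^sub>m r 0 + 0\<^sub>m e m * 0\<^sub>m m 0)"
    unfolding M_def J_blocks by (rule mult_four_block_mat) (use x B U Y in auto)
  also have "\<dots> = 0\<^sub>m (r + e) m"
    using x B U Y by (intro eq_matI) (auto simp: xB UB)
  finally have MJ: "M * J = 0\<^sub>m (r + e) m" .
  have "mat_kernel J = {0\<^sub>v m}"
  proof (intro equalityI subsetI)
    fix z assume z: "z \<in> mat_kernel J"
    then have zc: "z \<in> carrier_vec m" and "J *\<^sub>v z = 0\<^sub>v (r + m)"
      using mat_kernelD[OF J] by auto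
    then have "(B *\<^sub>v z) @\<^sub>v (- Y *\<^sub>v z) = 0\<^sub>v (r + m)"
      unfolding J_def using B Y by (simp add: mat_mult_append)
    also have "0\<^sub>v (r + m) = 0\<^sub>v r @\<^sub>v (0\<^sub>v m :: 'a vec)" by (intro eq_vecI) auto
    finally have "B *\<^sub>v z = 0\<^sub>v r"
      using append_vec_eq[OF mult_mat_vec_carrier[OF B zc] zero_carrier_vec] by simp
    then show "z \<in> {0\<^sub>v m}" using z J B B_inj by (auto simp: mat_kernel_def)
  qed (use J in \<open>auto intro!: mat_kernelI\<close>)
  then have "m \<le> kernel_dim M" by (rule kernel_dim_ge_of_mult_eq_zero[OF M J MJ])
  then show ?thesis using rank_plus_kernel_dim[OF M] unfolding M_def by simp
qed

lemma rank_four_block_le_of_mult_pow_eq_zero: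
  fixes x W U :: "'a::field mat"
  assumes x: "x \<in> carrier_mat r r" and W: "W \<in> carrier_mat r d" and U: "U \<in> carrier_mat e r"
    and UxW: "\<And>k. U * x ^\<^sub>m k * W = 0\<^sub>m e d"
  shows "vec_space.rank (r + e) (four_block_mat x W U (0\<^sub>m e d)) \<le> r"
proof -
  define K where "K = {v \<in> carrier_vec r. \<forall>k. U *\<^sub>v (x ^\<^sub>m k *\<^sub>v v) = 0\<^sub>v e}"
  obtain m B where B: "B \<in> carrier_mat r m" and B_inj: "mat_kernel B = {0\<^sub>v m}"
    and col_B: "\<And>j. j < m \<Longrightarrow> col B j \<in> K"
    and K_B: "\<And>v. v \<in> K \<Longrightarrow> \<exists>y\<in>carrier_vec m. v = B *\<^sub>v y"
    by (rule obtain_injective_mat_spanning[of K r]) (auto simp: K_def)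
  have x_K: "x *\<^sub>v v \<in> K" if v: "v \<in> K" for v
  proof -
    have "U *\<^sub>v (x ^\<^sub>m k *\<^sub>v (x *\<^sub>v v)) = 0\<^sub>v e" for k
    proof -
      have "U *\<^sub>v (x ^\<^sub>m k *\<^sub>v (x *\<^sub>v v)) = U *\<^sub>v (x ^\<^sub>m Suc k *\<^sub>v v)"
        using x v by (simp add: K_def assoc_mult_mat_vec[of _ r r _ r])
      also have "\<dots> = 0\<^sub>v e" using v unfolding K_def by blast
      finally show ?thesis .
    qed
    with v x show ?thesis unfolding K_def by auto
  qed
  have W_K: "col W j \<in> K" if j: "j < d" for j
  proof -
    have "U *\<^sub>v (x ^\<^sub>m k *\<^sub>v col W j) = 0\<^sub>v e" for k
    proof -
      have xk: "x ^\<^sub>m k \<in> carrier_mat r r" using x by simp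
      have "U *\<^sub>v (x ^\<^sub>m k *\<^sub>v col W j) = (U * x ^\<^sub>m k) *\<^sub>v col W j"
        using U W j xk by (intro assoc_mult_mat_vec[symmetric]) auto
      also have "\<dots> = col (U * x ^\<^sub>m k * W) j"
        using U W j xk by (intro col_mult2[of _ e r, symmetric]) auto
      finally show ?thesis using UxW j by simp
    qed
    with j W show ?thesis unfolding K_def by simp
  qed
  obtain Y where Y: "Y \<in> carrier_mat m m" and xB: "x * B = B * Y"
  proof (rule obtain_mult_right_factor[OF mult_carrier_mat[OF x B] B])
    fix j assume j: "j < m"
    have "col (x * B) j = x *\<^sub>v col B j" by (rule col_mult2[OF x B j])
    then show "\<exists>y\<in>carrier_vec m. col (x * B) j = B *\<^sub>v y" using K_B[OF x_K[OF col_B[OF j]]] by simp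
  qed
  obtain S where S: "S \<in> carrier_mat m d" and WB: "W = B * S"
    by (rule obtain_mult_right_factor[OF W B]) (use W_K K_B in blast)
  have UB: "U * B = 0\<^sub>m e m"
  proof (rule mat_col_eqI)
    fix j assume "j < dim_col (0\<^sub>m e m :: 'a mat)"
    then have j: "j < m" by simp
    have "col (U * B) j = U *\<^sub>v (x ^\<^sub>m 0 *\<^sub>v col B j)"
      using col_mult2[OF U B j] x B j by simp
    also have "\<dots> = 0\<^sub>v e" using col_B[OF j] unfolding K_def by blast
    finally show "col (U * B) j = col (0\<^sub>m e m) j" using j by simp
  qed (use U B in auto)
  define M where "M = four_block_mat x B U (0\<^sub>m e m)"
  define D where "D = four_block_mat (1\<^sub>m r) (0\<^sub>m r d) (0\<^sub>m m r) S"
  have M: "M \<in> carrier_mat (r + e) (r + m)" unfolding M_def using x B U by simp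
  have D: "D \<in> carrier_mat (r + m) (r + d)" unfolding D_def using S by simp
  have "M * D = four_block_mat (x * 1\<^sub>m r + B * 0\<^sub>m m r) (x * 0\<^sub>m r d + B * S)
      (U * 1\<^sub>m r + 0\<^sub>m e m * 0\<^sub>m m r) (U * 0\<^sub>m r d + 0\<^sub>m e m * S)"
    unfolding M_def D_def by (rule mult_four_block_mat) (use x B U S in auto)
  also have "\<dots> = four_block_mat x W U (0\<^sub>m e d)"
    using x B U S by (simp add: WB)
  finally have "vec_space.rank (r + e) (four_block_mat x W U (0\<^sub>m e d)) \<le> vec_space.rank (r + e) M"
    using rank_mult_right_le[OF M D] by simp
  also have "\<dots> \<le> r"
    unfolding M_def by (rule rank_four_block_invariant_le[OF x B U Y B_inj xB UB])
  finally show ?thesis .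
qed

theorem mainTheorem5:
  fixes E :: "complex mat set" and b c r :: nat and P Q :: "complex mat"
  assumes "mat_subspace b c E"
    and "r \<le> min b c"
    and "P \<in> carrier_mat b b" and "invertible_mat P"
    and "Q \<in> carrier_mat c c" and "invertible_mat Q"
    and "\<And>X x W U Z. X \<in> E \<Longrightarrow> split_block (P * X * Q) r r = (x, W, U, Z) \<Longrightarrow>
           Z = 0\<^sub>m (b - r) (c - r) \<and> (\<forall>k. U * (x ^\<^sub>m k) * W = 0\<^sub>m (b - r) (c - r))"
  shows "\<forall>X\<in>E. vec_space.rank b X \<le> r"
proof
  fix X assume "X \<in> E"
  then have X: "X \<in> carrier_mat b c" using assms(1) unfolding mat_subspace_def by auto
  obtain x W U Z where split: "split_block (P * X * Q) r r = (x, W, U, Z)"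
    by (metis prod_cases4)
  have "dim_row (P * X * Q) = r + (b - r)" "dim_col (P * X * Q) = r + (c - r)"
    using assms(2,3,5) by auto
  note blocks = split_block[OF split this]
  have Z: "Z = 0\<^sub>m (b - r) (c - r)" and UxW: "\<And>k. U * x ^\<^sub>m k * W = 0\<^sub>m (b - r) (c - r)"
    using assms(7)[OF \<open>X \<in> E\<close> split] by auto
  have "vec_space.rank b X = vec_space.rank b (P * X * Q)"
    using rank_mult_invertible[OF X assms(3-6)] by simp
  also have "\<dots> = vec_space.rank (r + (b - r)) (four_block_mat x W U (0\<^sub>m (b - r) (c - r)))"
    using blocks(5) Z assms(2) by simp
  also have "\<dots> \<le> r"
    using rank_four_block_le_of_mult_pow_eq_zero[OF blocks(1-3) UxW] .
  finally show "vec_space.rank b X \<le> r" .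
qed

end
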